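(* Let $R$ be a $K$-algebra, $J$ an ideal of $R$ which is locally f.d.ss, and $T$ a finite dimensional semisimple subalgebra of $R$ such that $R = T \oplus J$ as $K$-vector spaces. Then $R$ is locally f.d.ss if and only if the following holds: for every finite subset $Y \subseteq J$ there is an idempotent $e \in J$ such that $Y \subseteq eJe$ and $et = te$ for all $t \in T$.
   Context: $K$ is a field. All algebras are associative but not necessarily unital $K$-algebras; ideals are two-sided ring ideals that are also $K$-subspaces. A $K$-algebra $R$ is locally f.d.ss if every finite subset of $R$ is contained in a subalgebra of $R$ that is a finite dimensional semisimple $K$-algebra. *)

theory Defs
  imports Main "HOL.Vector_Spaces"
begin

text \<open>A (not necessarily unital) associative K-algebra: the carrier is the whole type 'a,
  a ring in the type-class sense (class ring does not require a unit),
  with a K-vector space structure given by scale, compatible with multiplication.\<close>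
definition K_algebra :: "('k::field \<Rightarrow> 'a::ring \<Rightarrow> 'a) \<Rightarrow> bool" where
  "K_algebra scale \<longleftrightarrow> vector_space scale \<and>
     (\<forall>c x y. scale c (x * y) = scale c x * y \<and> scale c (x * y) = x * scale c y)"

definition subalgebra :: "('k::field \<Rightarrow> 'a::ring \<Rightarrow> 'a) \<Rightarrow> 'a set \<Rightarrow> bool" where
  "subalgebra scale S \<longleftrightarrow> module.subspace scale S \<and> (\<forall>x\<in>S. \<forall>y\<in>S. x * y \<in> S)"

definition ideal_of :: "('k::field \<Rightarrow> 'a::ring \<Rightarrow> 'a) \<Rightarrow> 'a set \<Rightarrow> 'a set \<Rightarrow> bool" where
  "ideal_of scale S I \<longleftrightarrow> I \<subseteq> S \<and> module.subspace scale I \<and>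
     (\<forall>s\<in>S. \<forall>x\<in>I. s * x \<in> I \<and> x * s \<in> I)"

definition fin_dim :: "('k::field \<Rightarrow> 'a::ring \<Rightarrow> 'a) \<Rightarrow> 'a set \<Rightarrow> bool" where
  "fin_dim scale S \<longleftrightarrow> (\<exists>B. finite B \<and> B \<subseteq> S \<and> module.span scale B = S)"

text \<open>Product of a nonempty list (non-unital setting).\<close>
fun nprod :: "'a::ring list \<Rightarrow> 'a" where
  "nprod [] = 0"
| "nprod [x] = x"
| "nprod (x # y # xs) = x * nprod (y # xs)"

definition nilpotent_set :: "'a::ring set \<Rightarrow> bool" where
  "nilpotent_set I \<longleftrightarrow> (\<exists>n\<ge>1. \<forall>xs. length xs = n \<and> set xs \<subseteq> I \<longrightarrow> nprod xs = 0)"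

text \<open>A finite dimensional algebra is semisimple iff its (Jacobson) radical, which is the largest
  nilpotent ideal, vanishes, i.e. iff it has no nonzero nilpotent ideal.\<close>
definition fdss_subalgebra :: "('k::field \<Rightarrow> 'a::ring \<Rightarrow> 'a) \<Rightarrow> 'a set \<Rightarrow> bool" where
  "fdss_subalgebra scale S \<longleftrightarrow> subalgebra scale S \<and> fin_dim scale S \<and>
     (\<forall>I. ideal_of scale S I \<and> nilpotent_set I \<longrightarrow> I = {0})"

definition locally_fdss :: "('k::field \<Rightarrow> 'a::ring \<Rightarrow> 'a) \<Rightarrow> 'a set \<Rightarrow> bool" where
  "locally_fdss scale A \<longleftrightarrow> (\<forall>F. finite F \<and> F \<subseteq> A \<longrightarrow>
     (\<exists>S. F \<subseteq> S \<and> S \<subseteq> A \<and> fdss_subalgebra scale S))"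

end

theory Submission
  imports Defs
begin

(* Call S semiprime if x * x = 0 and x S x = 0 force x = 0 for x in S. For subalgebras this is
   equivalent to having no nonzero nilpotent ideal: if all products of n + 1 elements of an ideal
   vanish, then every product of n elements is left-annihilated by the ideal and hence vanishes;
   conversely such an x generates a square-zero principal ideal. So the f.d.ss subalgebras are
   the finitely spanned semiprime ones, and these are unital: a minimal right ideal contains a
   nonzero idempotent, and an idempotent e whose two-sided annihilator has least dimension is a
   unit, since a nonzero idempotent f in that annihilator would give the idempotent e + f with a
   smaller annihilator.

   If R is locally f.d.ss, take an f.d.ss A containing Y and a basis of T; the ideal A \<inter> J of A
   is again semiprime, and its unit e is central in A, which makes it the required idempotent.
   Conversely, given a finite F, take e for the J-components of F and an f.d.ss S0 \<subseteq> J
   containing them together with e and e T. Then T + e S0 e is a finite dimensional subalgebra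
   containing F. It is semiprime: if x = t + s has x * x = 0 and x (T + e S0 e) x = 0, then e x
   lies in the semiprime corner e S0 e and is killed, so x = t - e t; and t \<mapsto> t - e t, which
   plays the role of multiplication by 1 - e, is multiplicative on the centraliser of e and
   injective on T because T \<inter> J = {0}, so semiprimeness of T gives t = 0. *)

locale assoc_algebra = vector_space scale for scale :: "'k::field \<Rightarrow> 'a::ring \<Rightarrow> 'a" +
  assumes scale_mult_left: "scale c (x * y) = scale c x * y"
    and scale_mult_right: "scale c (x * y) = x * scale c y"

lemma assoc_algebraI: "K_algebra scale \<Longrightarrow> assoc_algebra scale"
  unfolding K_algebra_def assoc_algebra_def assoc_algebra_axioms_def by blast

lemma nprod_append_single: "xs \<noteq> [] \<Longrightarrow> nprod (xs @ [y]) = nprod xs * y"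
  by (induction xs rule: nprod.induct) (auto simp: mult.assoc)

lemma nprod_mem:
  "xs \<noteq> [] \<Longrightarrow> set xs \<subseteq> I \<Longrightarrow> (\<And>x y. x \<in> I \<Longrightarrow> y \<in> I \<Longrightarrow> x * y \<in> I) \<Longrightarrow> nprod xs \<in> I"
  by (induction xs rule: nprod.induct) auto

lemma summand_projection_exists:
  fixes T J :: "'a::ab_group_add set"
  assumes "\<forall>r. \<exists>t\<in>T. \<exists>j\<in>J. r = t + j"
  obtains p where "\<And>r. p r \<in> J \<and> r - p r \<in> T"
proof -
  have "\<forall>r. \<exists>j. j \<in> J \<and> r - j \<in> T"
  proof
    fix r
    obtain t j where "t \<in> T" "j \<in> J" "r = t + j"
      using assms by blast
    then show "\<exists>j. j \<in> J \<and> r - j \<in> T"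
      by auto
  qed
  with that show ?thesis
    by (metis choice)
qed

lemma idempotent_complement_mult:
  fixes e p q :: "'a::ring"
  assumes "e * e = e" and "p * e = e * p"
  shows "(p - e * p) * (q - e * q) = p * q - e * (p * q)"
proof -
  have "p * (e * q) = e * (p * q)" and "e * (p * (e * q)) = e * (p * q)"
    using assms by (metis mult.assoc)+
  then show ?thesis
    by (simp add: algebra_simps)
qed

context assoc_algebra
begin

lemma subalgebra_subspace: "subalgebra scale S \<Longrightarrow> subspace S"
  unfolding subalgebra_def by blast

lemma subalgebra_mult: "subalgebra scale S \<Longrightarrow> x \<in> S \<Longrightarrow> y \<in> S \<Longrightarrow> x * y \<in> S"
  unfolding subalgebra_def by blast

lemma module_hom_mult_left: "module_hom scale scale (\<lambda>x. a * x)"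
  by (simp add: module_hom_iff module_axioms distrib_left scale_mult_right)

lemma module_hom_mult_right: "module_hom scale scale (\<lambda>x. x * a)"
  by (simp add: module_hom_iff module_axioms distrib_right scale_mult_left)

lemma module_hom_sandwich: "module_hom scale scale (\<lambda>x. a * x * b)"
  using module_hom_compose[OF module_hom_mult_left module_hom_mult_right] by (simp add: o_def)

lemma mult_left_span: "x \<in> span G \<Longrightarrow> a * x \<in> span ((\<lambda>y. a * y) ` G)"
  using module_hom.span_image[OF module_hom_mult_left] by blast

lemma mult_right_span: "x \<in> span G \<Longrightarrow> x * a \<in> span ((\<lambda>y. y * a) ` G)"
  using module_hom.span_image[OF module_hom_mult_right] by blast

lemma span_mult_eq_0:
  assumes "\<And>g h. g \<in> G \<Longrightarrow> h \<in> H \<Longrightarrow> g * h = 0" and "u \<in> span G" and "v \<in> span H"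
  shows "u * v = 0"
proof -
  have "span H \<subseteq> {y. g * y = 0}" if "g \<in> G" for g
    using assms(1) that by (intro span_minimal module_hom.subspace_kernel[OF module_hom_mult_left]) auto
  then have "span G \<subseteq> {x. x * v = 0}"
    using assms(3) by (intro span_minimal module_hom.subspace_kernel[OF module_hom_mult_right]) auto
  then show ?thesis
    using assms(2) by blast
qed

subsection \<open>Finitely spanned subspaces\<close>

definition fin_spanned :: "'a set \<Rightarrow> bool" where
  "fin_spanned S \<longleftrightarrow> (\<exists>W. finite W \<and> S \<subseteq> span W)"

lemma fin_spanned_subset: "fin_spanned T \<Longrightarrow> S \<subseteq> T \<Longrightarrow> fin_spanned S"
  unfolding fin_spanned_def by blast

lemma fin_spanned_sums:
  assumes "fin_spanned S" and "fin_spanned T"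
  shows "fin_spanned {s + t | s t. s \<in> S \<and> t \<in> T}"
proof -
  obtain V W where "finite V" "S \<subseteq> span V" "finite W" "T \<subseteq> span W"
    using assms unfolding fin_spanned_def by blast
  moreover have "{s + t | s t. s \<in> S \<and> t \<in> T} \<subseteq> span (V \<union> W)"
  proof clarify
    fix s t assume "s \<in> S" "t \<in> T"
    then have "s \<in> span (V \<union> W)" and "t \<in> span (V \<union> W)"
      using \<open>S \<subseteq> span V\<close> \<open>T \<subseteq> span W\<close> span_mono[of V "V \<union> W"] span_mono[of W "V \<union> W"] by blast+
    then show "s + t \<in> span (V \<union> W)"
      by (rule span_add)
  qed
  ultimately show ?thesis
    unfolding fin_spanned_def by blast
qed

lemma fin_dim_iff_fin_spanned:
  assumes "subspace S"
  shows "fin_dim scale S \<longleftrightarrow> fin_spanned S"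
proof
  assume "fin_dim scale S"
  then obtain B where "finite B" "span B = S"
    unfolding fin_dim_def by blast
  then show "fin_spanned S"
    unfolding fin_spanned_def by auto
next
  assume "fin_spanned S"
  then obtain W where W: "finite W" "S \<subseteq> span W"
    unfolding fin_spanned_def by blast
  obtain B where B: "B \<subseteq> S" "independent B" "S \<subseteq> span B"
    by (meson basis_exists)
  have "finite B"
    using independent_span_bound[OF W(1) B(2) order_trans[OF B(1) W(2)]] by (rule conjunct1)
  moreover have "span B = S"
    using span_subspace[OF B(1,3) assms] .
  ultimately show "fin_dim scale S"
    unfolding fin_dim_def using B(1) by (intro exI[of _ B]) simp
qed

lemma subspace_eq_if_dim_le:
  assumes "subspace S" and "S \<subseteq> T" and "fin_spanned T" and "dim T \<le> dim S"
  shows "S = T"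
proof (rule ccontr)
  assume "S \<noteq> T"
  then obtain x where x: "x \<in> T" "x \<notin> S"
    using assms(2) by blast
  obtain W where W: "finite W" "T \<subseteq> span W"
    using assms(3) unfolding fin_spanned_def by blast
  obtain BS where BS: "BS \<subseteq> S" "independent BS" "S \<subseteq> span BS" "card BS = dim S"
    by (rule basis_exists)
  obtain BT where BT: "BT \<subseteq> T" "independent BT" "T \<subseteq> span BT" "card BT = dim T"
    by (rule basis_exists)
  have "finite BT"
    using independent_span_bound[OF W(1) BT(2) order_trans[OF BT(1) W(2)]] by (rule conjunct1)
  have "x \<notin> span BS"
    using x(2) span_subspace[OF BS(1,3) assms(1)] by simp
  then have "independent (insert x BS)"
    by (rule independent_insertI[OF _ BS(2)])
  moreover have "insert x BS \<subseteq> span BT"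
    using BS(1) BT(3) x(1) assms(2) by blast
  ultimately have "finite (insert x BS) \<and> card (insert x BS) \<le> card BT"
    by (rule independent_span_bound[OF \<open>finite BT\<close>])
  moreover have "x \<notin> BS"
    using x(2) BS(1) by blast
  ultimately show False
    using assms(4) BS(4) BT(4) by (auto simp: card_insert_if)
qed

subsection \<open>Semiprime subalgebras\<close>

definition semiprime :: "'a set \<Rightarrow> bool" where
  "semiprime S \<longleftrightarrow> (\<forall>x\<in>S. x * x = 0 \<and> (\<forall>a\<in>S. x * a * x = 0) \<longrightarrow> x = 0)"

lemma semiprimeD: "semiprime S \<Longrightarrow> x \<in> S \<Longrightarrow> x * x = 0 \<Longrightarrow> (\<And>a. a \<in> S \<Longrightarrow> x * a * x = 0) \<Longrightarrow> x = 0"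
  unfolding semiprime_def by blast

lemma semiprime_ideal_left_annihilator:
  assumes "semiprime S" and I: "ideal_of scale S I" and "x \<in> I" and "\<And>y. y \<in> I \<Longrightarrow> x * y = 0"
  shows "x = 0"
proof (rule semiprimeD[OF assms(1)])
  show "x \<in> S" "x * x = 0"
    using assms(3,4) I unfolding ideal_of_def by auto
  show "x * a * x = 0" if "a \<in> S" for a
    using assms(3) assms(4)[of "a * x"] I that unfolding ideal_of_def by (simp add: mult.assoc)
qed

lemma semiprime_no_nilpotent_ideal:
  assumes "semiprime S" and I: "ideal_of scale S I" and "nilpotent_set I"
  shows "I = {0}"
proof -
  have I_mult: "x * y \<in> I" if "x \<in> I" "y \<in> I" for x y
    using I that unfolding ideal_of_def by blast
  have vanish: "I \<subseteq> {0}" if "\<forall>xs. length xs = Suc n \<and> set xs \<subseteq> I \<longrightarrow> nprod xs = 0" for n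
    using that
  proof (induction n)
    case 0
    have "x = 0" if "x \<in> I" for x
      using 0[rule_format, of "[x]"] that by simp
    then show ?case
      by blast
  next
    case (Suc n)
    have "nprod xs = 0" if xs: "length xs = Suc n" "set xs \<subseteq> I" for xs
    proof (rule semiprime_ideal_left_annihilator[OF assms(1) I])
      have "xs \<noteq> []"
        using xs(1) by auto
      then show "nprod xs \<in> I"
        using nprod_mem[of xs I] I_mult xs(2) by blast
      show "nprod xs * y = 0" if "y \<in> I" for y
        using Suc.prems[rule_format, of "xs @ [y]"] nprod_append_single[OF \<open>xs \<noteq> []\<close>] xs that
        by simp
    qed
    then show ?case
      using Suc.IH by blast
  qed
  obtain n where "n \<ge> 1" and "\<forall>xs. length xs = n \<and> set xs \<subseteq> I \<longrightarrow> nprod xs = 0"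
    using assms(3) unfolding nilpotent_set_def by blast
  moreover have "Suc (n - 1) = n"
    using \<open>n \<ge> 1\<close> by simp
  ultimately have "I \<subseteq> {0}"
    using vanish[of "n - 1"] by simp
  moreover have "0 \<in> I"
    using I subspace_0 unfolding ideal_of_def by blast
  ultimately show ?thesis
    by blast
qed

definition principal_ideal :: "'a set \<Rightarrow> 'a \<Rightarrow> 'a set" where
  "principal_ideal S x =
     span ({x} \<union> {a * x | a. a \<in> S} \<union> {x * b | b. b \<in> S} \<union> {a * x * b | a b. a \<in> S \<and> b \<in> S})"

lemma ideal_of_principal_ideal:
  assumes S: "subalgebra scale S" and "x \<in> S"
  shows "ideal_of scale S (principal_ideal S x)"
proof -
  define G where
    "G = {x} \<union> {a * x | a. a \<in> S} \<union> {x * b | b. b \<in> S} \<union> {a * x * b | a b. a \<in> S \<and> b \<in> S}"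
  have "G \<subseteq> S"
    unfolding G_def using assms subalgebra_mult by blast
  moreover have left_closed: "(\<lambda>y. s * y) ` G \<subseteq> G" if "s \<in> S" for s
    unfolding G_def using that subalgebra_mult[OF S] by (auto simp: mult.assoc[symmetric]) blast+
  moreover have right_closed: "(\<lambda>y. y * s) ` G \<subseteq> G" if "s \<in> S" for s
    unfolding G_def using that subalgebra_mult[OF S] by (auto simp: mult.assoc) blast+
  ultimately show ?thesis
    unfolding ideal_of_def principal_ideal_def G_def[symmetric]
  proof (intro conjI ballI)
    show "span G \<subseteq> S"
      using \<open>G \<subseteq> S\<close> span_minimal subalgebra_subspace[OF S] by blast
    fix s y assume "s \<in> S" "y \<in> span G"
    show "s * y \<in> span G"
      using mult_left_span[OF \<open>y \<in> span G\<close>] span_mono[OF left_closed[OF \<open>s \<in> S\<close>]] by blast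
    show "y * s \<in> span G"
      using mult_right_span[OF \<open>y \<in> span G\<close>] span_mono[OF right_closed[OF \<open>s \<in> S\<close>]] by blast
  qed simp
qed

lemma no_nilpotent_ideal_semiprime:
  assumes S: "subalgebra scale S" and no_nil: "\<forall>I. ideal_of scale S I \<and> nilpotent_set I \<longrightarrow> I = {0}"
  shows "semiprime S"
  unfolding semiprime_def
proof (intro ballI impI)
  fix x assume "x \<in> S" and x: "x * x = 0 \<and> (\<forall>a\<in>S. x * a * x = 0)"
  have xax: "x * (a * x) = 0" if "a \<in> S" for a
    using x that by (simp add: mult.assoc)
  have xaxz: "x * (a * (x * z)) = 0" if "a \<in> S" for a z
    using xax[OF that] by (metis mult.assoc mult_zero_left)
  have xabx: "x * (a * (b * x)) = 0" "x * (a * (b * (x * z))) = 0" if "a \<in> S" "b \<in> S" for a b z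
    using xax xaxz subalgebra_mult[OF S that] by (simp_all flip: mult.assoc[of a b])
  have xx: "x * x = 0" "x * (x * z) = 0" for z
    using x by (simp_all flip: mult.assoc)
  have "u * v = 0" if "u \<in> principal_ideal S x" "v \<in> principal_ideal S x" for u v
    using that unfolding principal_ideal_def
    by (rule span_mult_eq_0[rotated]) (auto simp: mult.assoc xx xax xaxz xabx)
  then have "nilpotent_set (principal_ideal S x)"
    unfolding nilpotent_set_def
    by (intro exI[of _ 2]) (auto simp: numeral_2_eq_2 length_Suc_conv)
  then have "principal_ideal S x = {0}"
    using no_nil ideal_of_principal_ideal[OF S \<open>x \<in> S\<close>] by blast
  moreover have "x \<in> principal_ideal S x"
    unfolding principal_ideal_def by (rule span_base) blast
  ultimately show "x = 0"
    by blast
qed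

lemma fdss_subalgebra_iff:
  "fdss_subalgebra scale S \<longleftrightarrow> subalgebra scale S \<and> fin_spanned S \<and> semiprime S"
  unfolding fdss_subalgebra_def
  using fin_dim_iff_fin_spanned[OF subalgebra_subspace] semiprime_no_nilpotent_ideal
    no_nilpotent_ideal_semiprime
  by blast

subsection \<open>Idempotents and units\<close>

definition right_ideal :: "'a set \<Rightarrow> 'a set \<Rightarrow> bool" where
  "right_ideal V L \<longleftrightarrow> subspace L \<and> L \<subseteq> V \<and> (\<forall>l\<in>L. \<forall>v\<in>V. l * v \<in> L)"

lemma minimal_right_ideal_exists:
  assumes V: "subalgebra scale V" "fin_spanned V" and "V \<noteq> {0}"
  obtains L where "right_ideal V L" "L \<noteq> {0}"
    "\<And>L'. right_ideal V L' \<Longrightarrow> L' \<noteq> {0} \<Longrightarrow> L' \<subseteq> L \<Longrightarrow> L' = L"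
proof -
  have "right_ideal V V"
    unfolding right_ideal_def using V(1) subalgebra_subspace subalgebra_mult by blast
  then obtain L where L: "right_ideal V L" "L \<noteq> {0}"
    and least: "\<And>L'. right_ideal V L' \<and> L' \<noteq> {0} \<Longrightarrow> dim L \<le> dim L'"
    using ex_has_least_nat[of "\<lambda>L. right_ideal V L \<and> L \<noteq> {0}" V dim] \<open>V \<noteq> {0}\<close> by blast
  have "L' = L" if "right_ideal V L'" "L' \<noteq> {0}" "L' \<subseteq> L" for L'
  proof (rule subspace_eq_if_dim_le)
    show "subspace L'"
      using that(1) unfolding right_ideal_def by blast
    show "fin_spanned L"
      using L(1) V(2) fin_spanned_subset unfolding right_ideal_def by blast
  qed (use that least in auto)
  with L that show ?thesis
    by blast
qed

lemma minimal_right_ideal_idempotent: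
  assumes L: "right_ideal V L" and minimal: "\<And>L'. right_ideal V L' \<Longrightarrow> L' \<noteq> {0} \<Longrightarrow> L' \<subseteq> L \<Longrightarrow> L' = L"
    and "l \<in> L" "x \<in> L" "l * x \<noteq> 0"
  obtains f where "f \<in> L" "f \<noteq> 0" "f * f = f"
proof -
  have L_sub: "subspace L" and "L \<subseteq> V" and L_mult: "\<And>l v. l \<in> L \<Longrightarrow> v \<in> V \<Longrightarrow> l * v \<in> L"
    using L unfolding right_ideal_def by blast+
  have "right_ideal V ((\<lambda>m. l * m) ` L)"
    unfolding right_ideal_def
  proof (intro conjI ballI)
    show "subspace ((\<lambda>m. l * m) ` L)"
      using module_hom.subspace_image[OF module_hom_mult_left L_sub] .
    show "(\<lambda>m. l * m) ` L \<subseteq> V"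
      using \<open>l \<in> L\<close> L_mult \<open>L \<subseteq> V\<close> by blast
    fix y v assume "y \<in> (\<lambda>m. l * m) ` L" "v \<in> V"
    then show "y * v \<in> (\<lambda>m. l * m) ` L"
      using L_mult by (auto simp: mult.assoc)
  qed
  moreover have "(\<lambda>m. l * m) ` L \<noteq> {0}"
    using \<open>x \<in> L\<close> \<open>l * x \<noteq> 0\<close> by blast
  moreover have "(\<lambda>m. l * m) ` L \<subseteq> L"
    using L_mult[OF \<open>l \<in> L\<close>] \<open>L \<subseteq> V\<close> by blast
  ultimately have "(\<lambda>m. l * m) ` L = L"
    by (rule minimal)
  then obtain f where f: "f \<in> L" "l * f = l"
    using \<open>l \<in> L\<close> by (metis imageE)
  define R where "R = {m \<in> L. l * m = 0}"
  have "right_ideal V R"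
    unfolding right_ideal_def
  proof (intro conjI ballI)
    show "subspace R"
      unfolding R_def
      using subspace_inter[OF L_sub module_hom.subspace_kernel[OF module_hom_mult_left, of l]]
      by (simp add: Int_def)
    show "R \<subseteq> V"
      unfolding R_def using \<open>L \<subseteq> V\<close> by blast
    fix m v assume "m \<in> R" "v \<in> V"
    then show "m * v \<in> R"
      unfolding R_def using L_mult by (simp flip: mult.assoc)
  qed
  moreover have "f \<notin> R"
    using f \<open>l * x \<noteq> 0\<close> unfolding R_def by auto
  ultimately have "R = {0}"
    using minimal f(1) unfolding R_def by blast
  moreover have "f * f - f \<in> R"
  proof -
    have "f * f - f \<in> L"
      using subspace_diff[OF L_sub L_mult[OF f(1)] f(1)] f(1) \<open>L \<subseteq> V\<close> by blast
    moreover have "l * (f * f - f) = 0"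
      using f(2) by (simp add: right_diff_distrib flip: mult.assoc)
    ultimately show ?thesis
      unfolding R_def by blast
  qed
  ultimately have "f * f = f"
    by simp
  moreover have "f \<noteq> 0"
    using f(2) \<open>l * x \<noteq> 0\<close> by auto
  ultimately show ?thesis
    using that f(1) by blast
qed

lemma semiprime_idempotent_exists:
  assumes "subalgebra scale V" "fin_spanned V" "semiprime V" "V \<noteq> {0}"
  obtains f where "f \<in> V" "f \<noteq> 0" "f * f = f"
proof -
  obtain L where L: "right_ideal V L" "L \<noteq> {0}"
    and minimal: "\<And>L'. right_ideal V L' \<Longrightarrow> L' \<noteq> {0} \<Longrightarrow> L' \<subseteq> L \<Longrightarrow> L' = L"
    using minimal_right_ideal_exists[OF assms(1,2,4)] by blast
  have "subspace L" and "L \<subseteq> V" and L_mult: "\<And>l v. l \<in> L \<Longrightarrow> v \<in> V \<Longrightarrow> l * v \<in> L"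
    using L(1) unfolding right_ideal_def by blast+
  obtain x where x: "x \<in> L" "x \<noteq> 0"
    using L(2) subspace_0[OF \<open>subspace L\<close>] by blast
  obtain l where "l \<in> L" "l * x \<noteq> 0"
  proof (cases "x * x = 0")
    case True
    then obtain a where "a \<in> V" "x * a * x \<noteq> 0"
      using \<open>semiprime V\<close> x \<open>L \<subseteq> V\<close> unfolding semiprime_def by blast
    then show ?thesis
      using that L_mult[OF x(1)] by blast
  qed (use that x in blast)
  then obtain f where "f \<in> L" "f \<noteq> 0" "f * f = f"
    using minimal_right_ideal_idempotent[OF L(1) minimal _ x(1)] by blast
  with \<open>L \<subseteq> V\<close> that show ?thesis
    by blast
qed

definition annihilator :: "'a set \<Rightarrow> 'a \<Rightarrow> 'a set" where
  "annihilator U e = {x \<in> U. e * x = 0 \<and> x * e = 0}"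

lemma subalgebra_annihilator:
  assumes "subalgebra scale U"
  shows "subalgebra scale (annihilator U e)"
  unfolding subalgebra_def
proof (intro conjI ballI)
  have "annihilator U e = U \<inter> {x. e * x = 0} \<inter> {x. x * e = 0}"
    unfolding annihilator_def by blast
  then show "subspace (annihilator U e)"
    using subalgebra_subspace[OF assms] module_hom.subspace_kernel[OF module_hom_mult_left]
      module_hom.subspace_kernel[OF module_hom_mult_right]
    by (simp add: subspace_inter)
  fix x y assume "x \<in> annihilator U e" "y \<in> annihilator U e"
  then show "x * y \<in> annihilator U e"
    unfolding annihilator_def using subalgebra_mult[OF assms]
    by (simp add: mult.assoc flip: mult.assoc[of e])
qed

lemma semiprime_annihilator:
  assumes U: "subalgebra scale U" "semiprime U" and e: "e \<in> U" "e * e = e"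
  shows "semiprime (annihilator U e)"
  unfolding semiprime_def
proof (intro ballI impI)
  fix y assume y: "y \<in> annihilator U e" and nil: "y * y = 0 \<and> (\<forall>a\<in>annihilator U e. y * a * y = 0)"
  have "y \<in> U" and ey: "e * y = 0" and ye: "y * e = 0"
    using y unfolding annihilator_def by blast+
  have ee: "e * (e * z) = e * z" for z
    using e(2) by (simp flip: mult.assoc)
  have ye2: "y * (e * z) = 0" for z
    using ye by (simp flip: mult.assoc)
  have "y * a * y = 0" if "a \<in> U" for a
  proof -
    \<comment> \<open>the Peirce component (1 - e) a (1 - e), written without a unit\<close>
    define a' where "a' = a - e * a - a * e + e * a * e"
    have "a' \<in> U"
      unfolding a'_def using U(1) subalgebra_subspace subalgebra_mult that e(1)
      by (metis subspace_add subspace_diff)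
    moreover have "e * a' = 0" and "a' * e = 0"
      unfolding a'_def by (simp_all add: algebra_simps e(2) ee)
    ultimately have "y * a' * y = 0"
      using nil unfolding annihilator_def by blast
    moreover have "y * a' * y = y * a * y"
      unfolding a'_def by (simp add: algebra_simps ey ye2)
    ultimately show ?thesis
      by simp
  qed
  then show "y = 0"
    using U(2) \<open>y \<in> U\<close> nil unfolding semiprime_def by blast
qed

lemma annihilator_trivial_left_faithful:
  assumes U: "subalgebra scale U" "semiprime U" and e: "e \<in> U" "e * e = e"
    and ann: "annihilator U e = {0}" and "z \<in> U" and "e * z = 0"
  shows "z = 0"
proof -
  have absorb: "w = w * e" if "w \<in> U" "e * w = 0" for w
  proof -
    have "w - w * e \<in> U"
      using that(1) e(1) U(1) subalgebra_mult subalgebra_subspace subspace_diff by metis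
    moreover have "e * (w - w * e) = 0"
      using that(2) by (simp add: right_diff_distrib flip: mult.assoc)
    moreover have "(w - w * e) * e = 0"
      using e(2) by (simp add: left_diff_distrib mult.assoc)
    ultimately have "w - w * e \<in> annihilator U e"
      unfolding annihilator_def by blast
    then show ?thesis
      using ann by simp
  qed
  show ?thesis
  proof (rule semiprimeD[OF U(2) \<open>z \<in> U\<close>])
    show "z * z = 0"
      using absorb[OF \<open>z \<in> U\<close> \<open>e * z = 0\<close>] \<open>e * z = 0\<close> by (metis mult.assoc mult_zero_right)
    show "z * a * z = 0" if "a \<in> U" for a
    proof -
      have "e * (z * a) = 0"
        using \<open>e * z = 0\<close> by (simp flip: mult.assoc)
      then have "z * a = z * a * e"
        by (rule absorb[OF subalgebra_mult[OF U(1) \<open>z \<in> U\<close> that]])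
      then show ?thesis
        using \<open>e * z = 0\<close> by (metis mult.assoc mult_zero_right)
    qed
  qed
qed

lemma annihilator_trivial_right_faithful:
  assumes U: "subalgebra scale U" "semiprime U" and e: "e \<in> U" "e * e = e"
    and ann: "annihilator U e = {0}" and "z \<in> U" and "z * e = 0"
  shows "z = 0"
proof -
  have absorb: "w = e * w" if "w \<in> U" "w * e = 0" for w
  proof -
    have "w - e * w \<in> U"
      using that(1) e(1) U(1) subalgebra_mult subalgebra_subspace subspace_diff by metis
    moreover have "e * (w - e * w) = 0"
      using e(2) by (simp add: right_diff_distrib flip: mult.assoc)
    moreover have "(w - e * w) * e = 0"
      using that(2) by (simp add: left_diff_distrib mult.assoc)
    ultimately have "w - e * w \<in> annihilator U e"
      unfolding annihilator_def by blast
    then show ?thesis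
      using ann by simp
  qed
  show ?thesis
  proof (rule semiprimeD[OF U(2) \<open>z \<in> U\<close>])
    show "z * z = 0"
      using absorb[OF \<open>z \<in> U\<close> \<open>z * e = 0\<close>] \<open>z * e = 0\<close> by (metis mult.assoc mult_zero_left)
    show "z * a * z = 0" if "a \<in> U" for a
    proof -
      have "a * z * e = 0"
        using \<open>z * e = 0\<close> by (simp add: mult.assoc)
      then have "a * z = e * (a * z)"
        by (rule absorb[OF subalgebra_mult[OF U(1) that \<open>z \<in> U\<close>]])
      then show ?thesis
        using \<open>z * e = 0\<close> by (metis mult.assoc mult_zero_left)
    qed
  qed
qed

lemma annihilator_trivial_imp_unit:
  assumes U: "subalgebra scale U" "semiprime U" and e: "e \<in> U" "e * e = e"
    and ann: "annihilator U e = {0}" and "y \<in> U"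
  shows "e * y = y" and "y * e = y"
proof -
  have "y - e * y \<in> U" and "y - y * e \<in> U"
    using \<open>y \<in> U\<close> e(1) U(1) subalgebra_mult subalgebra_subspace subspace_diff by metis+
  moreover have "e * (y - e * y) = 0"
    using e(2) by (simp add: right_diff_distrib flip: mult.assoc)
  moreover have "(y - y * e) * e = 0"
    using e(2) by (simp add: left_diff_distrib mult.assoc)
  ultimately have "y - e * y = 0" and "y - y * e = 0"
    using annihilator_trivial_left_faithful[OF U e ann] annihilator_trivial_right_faithful[OF U e ann] by blast+
  then show "e * y = y" and "y * e = y"
    by simp_all
qed

lemma annihilator_orthogonal_sum_subset:
  assumes "e * e = e" and "e * f = 0" and "f * e = 0"
  shows "annihilator U (e + f) \<subseteq> annihilator U e"
proof
  fix x assume "x \<in> annihilator U (e + f)"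
  then have "x \<in> U" and "(e + f) * x = 0" and "x * (e + f) = 0"
    unfolding annihilator_def by blast+
  moreover have "e * x = e * ((e + f) * x)"
    using assms(1,2) by (simp add: distrib_left distrib_right flip: mult.assoc)
  moreover have "x * e = x * (e + f) * e"
    using assms(1,3) by (simp add: distrib_left distrib_right mult.assoc)
  ultimately show "x \<in> annihilator U e"
    unfolding annihilator_def by simp
qed

lemma semiprime_unit_exists:
  assumes U: "subalgebra scale U" "fin_spanned U" "semiprime U"
  obtains e where "e \<in> U" "\<And>y. y \<in> U \<Longrightarrow> e * y = y \<and> y * e = y"
proof -
  have "0 \<in> U"
    using subalgebra_subspace[OF U(1)] subspace_0 by blast
  then obtain e where e: "e \<in> U" "e * e = e"
    and least: "\<And>e'. e' \<in> U \<Longrightarrow> e' * e' = e' \<Longrightarrow> dim (annihilator U e) \<le> dim (annihilator U e')"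
    using ex_has_least_nat[of "\<lambda>e. e \<in> U \<and> e * e = e" 0 "\<lambda>e. dim (annihilator U e)"] by auto
  have "annihilator U e = {0}"
  proof (rule ccontr)
    assume "annihilator U e \<noteq> {0}"
    moreover have "annihilator U e \<subseteq> U"
      unfolding annihilator_def by blast
    ultimately obtain f where f: "f \<in> annihilator U e" "f \<noteq> 0" "f * f = f"
      using semiprime_idempotent_exists[OF subalgebra_annihilator[OF U(1)] _
          semiprime_annihilator[OF U(1,3) e]] fin_spanned_subset[OF U(2)] by metis
    then have "f \<in> U" and ef: "e * f = 0" and fe: "f * e = 0"
      unfolding annihilator_def by blast+
    have "e + f \<in> U"
      using subspace_add[OF subalgebra_subspace[OF U(1)] e(1) \<open>f \<in> U\<close>] .
    moreover have "(e + f) * (e + f) = e + f"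
      by (simp add: algebra_simps e(2) f(3) ef fe)
    moreover have "annihilator U (e + f) \<subseteq> annihilator U e"
      using annihilator_orthogonal_sum_subset[OF e(2) ef fe] .
    ultimately have "annihilator U (e + f) = annihilator U e"
      using subspace_eq_if_dim_le least subalgebra_subspace[OF subalgebra_annihilator[OF U(1)]]
        fin_spanned_subset[OF U(2) \<open>annihilator U e \<subseteq> U\<close>] by blast
    moreover have "f \<notin> annihilator U (e + f)"
      using f(2,3) ef unfolding annihilator_def by (simp add: algebra_simps)
    ultimately show False
      using f(1) by blast
  qed
  then show ?thesis
    using that e(1) annihilator_trivial_imp_unit[OF U(1,3) e] by blast
qed

lemma semiprime_ideal:
  assumes "semiprime A" and I: "ideal_of scale A I"
  shows "semiprime I"
  unfolding semiprime_def
proof (intro ballI impI)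
  fix y assume "y \<in> I" and nil: "y * y = 0 \<and> (\<forall>b\<in>I. y * b * y = 0)"
  have "I \<subseteq> A" and I_left: "\<And>s x. s \<in> A \<Longrightarrow> x \<in> I \<Longrightarrow> s * x \<in> I"
    and I_right: "\<And>s x. s \<in> A \<Longrightarrow> x \<in> I \<Longrightarrow> x * s \<in> I"
    using I unfolding ideal_of_def by blast+
  have "y \<in> A"
    using \<open>y \<in> I\<close> \<open>I \<subseteq> A\<close> by blast
  have "y * a * y = 0" if "a \<in> A" for a
  proof (rule semiprimeD[OF assms(1)])
    show "y * a * y \<in> A"
      using I_right[OF \<open>y \<in> A\<close> I_right[OF that \<open>y \<in> I\<close>]] \<open>I \<subseteq> A\<close> by blast
    have "a * y * y * a \<in> I"
      using I_right[OF that I_right[OF \<open>y \<in> A\<close> I_left[OF that \<open>y \<in> I\<close>]]] .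
    moreover have "y * a * y * (y * a * y) = y * (a * y * y * a) * y"
      by (simp add: mult.assoc)
    ultimately show "y * a * y * (y * a * y) = 0"
      using nil by simp
    fix b assume "b \<in> A"
    have "a * y * b * y * a \<in> I"
      using I_right[OF that I_right[OF \<open>y \<in> A\<close> I_right[OF \<open>b \<in> A\<close> I_left[OF that \<open>y \<in> I\<close>]]]] .
    moreover have "y * a * y * b * (y * a * y) = y * (a * y * b * y * a) * y"
      by (simp add: mult.assoc)
    ultimately show "y * a * y * b * (y * a * y) = 0"
      using nil by simp
  qed
  then show "y = 0"
    using semiprimeD[OF assms(1) \<open>y \<in> A\<close>] nil by blast
qed

lemma ideal_central_unit_exists:
  assumes "fdss_subalgebra scale A" and I: "ideal_of scale A I"
  obtains e where "e \<in> I" "e * e = e" "\<And>y. y \<in> I \<Longrightarrow> e * y = y \<and> y * e = y"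
    "\<And>a. a \<in> A \<Longrightarrow> e * a = a * e"
proof -
  have A: "subalgebra scale A" "fin_spanned A" "semiprime A"
    using assms(1) fdss_subalgebra_iff by blast+
  have "I \<subseteq> A" and I_sub: "subspace I" and I_mult: "\<And>s x. s \<in> A \<Longrightarrow> x \<in> I \<Longrightarrow> s * x \<in> I \<and> x * s \<in> I"
    using I unfolding ideal_of_def by blast+
  have "subalgebra scale I"
    unfolding subalgebra_def using I_sub I_mult \<open>I \<subseteq> A\<close> by blast
  then obtain e where e: "e \<in> I" and unit: "\<And>y. y \<in> I \<Longrightarrow> e * y = y \<and> y * e = y"
    using semiprime_unit_exists[OF _ fin_spanned_subset[OF A(2) \<open>I \<subseteq> A\<close>] semiprime_ideal[OF A(3) I]]
    by blast
  have "e * a = a * e" if "a \<in> A" for a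
  proof -
    have "e * a = e * a * e" and "a * e = e * (a * e)"
      using unit I_mult[OF that e] by simp_all
    then show ?thesis
      by (simp add: mult.assoc)
  qed
  with that e unit show ?thesis
    by blast
qed

subsection \<open>Corners and split extensions\<close>

definition corner :: "'a \<Rightarrow> 'a set \<Rightarrow> 'a set" where
  "corner e S = (\<lambda>x. e * x * e) ` S"

lemma corner_unit:
  assumes "e * e = e" and "s \<in> corner e S"
  shows "e * s = s" and "s * e = s"
  using assms unfolding corner_def by (auto simp flip: mult.assoc) (simp add: mult.assoc)

lemma fin_spanned_corner:
  assumes "fin_spanned S"
  shows "fin_spanned (corner e S)"
proof -
  obtain W where "finite W" "S \<subseteq> span W"
    using assms unfolding fin_spanned_def by blast
  then have "corner e S \<subseteq> span ((\<lambda>x. e * x * e) ` W)"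
    unfolding corner_def module_hom.span_image[OF module_hom_sandwich] by blast
  with \<open>finite W\<close> show ?thesis
    unfolding fin_spanned_def by blast
qed

lemma corner_memI: "x \<in> S \<Longrightarrow> e * x * e = x \<Longrightarrow> x \<in> corner e S"
  unfolding corner_def by force

lemma corner_subset: "subalgebra scale S \<Longrightarrow> e \<in> S \<Longrightarrow> corner e S \<subseteq> S"
  unfolding corner_def using subalgebra_mult by blast

lemma subalgebra_corner:
  assumes S: "subalgebra scale S" and e: "e \<in> S" "e * e = e"
  shows "subalgebra scale (corner e S)"
  unfolding subalgebra_def
proof (intro conjI ballI)
  show "subspace (corner e S)"
    unfolding corner_def using module_hom.subspace_image[OF module_hom_sandwich subalgebra_subspace[OF S]] .
  fix x y assume "x \<in> corner e S" "y \<in> corner e S"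
  then obtain a b where "a \<in> S" "b \<in> S" and xy: "x = e * a * e" "y = e * b * e"
    unfolding corner_def by blast
  then have "a * e * b \<in> S"
    using subalgebra_mult[OF S] e(1) by blast
  moreover have "x * y = e * (a * e * b) * e"
    unfolding xy using e(2) by (simp add: mult.assoc flip: mult.assoc[of e e])
  ultimately show "x * y \<in> corner e S"
    unfolding corner_def by blast
qed

lemma semiprime_corner:
  assumes S: "subalgebra scale S" "semiprime S" and e: "e \<in> S" "e * e = e"
  shows "semiprime (corner e S)"
  unfolding semiprime_def
proof (intro ballI impI)
  fix y assume y: "y \<in> corner e S" and nil: "y * y = 0 \<and> (\<forall>c\<in>corner e S. y * c * y = 0)"
  have "y * a * y = 0" if "a \<in> S" for a
  proof -
    have "y * a * y = y * (e * a * e) * y"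
      using corner_unit[OF e(2) y] by (metis mult.assoc)
    then show ?thesis
      using nil that unfolding corner_def by auto
  qed
  then show "y = 0"
    using semiprimeD[OF S(2)] corner_subset[OF S(1) e(1)] y nil by blast
qed

context
  fixes T S :: "'a set" and e :: 'a
  assumes T: "subalgebra scale T" and S: "subalgebra scale S"
    and e_mem: "e \<in> S" and e_unit: "\<And>s. s \<in> S \<Longrightarrow> e * s = s \<and> s * e = s"
    and e_commute: "\<And>t. t \<in> T \<Longrightarrow> e * t = t * e"
    and e_absorb: "\<And>t. t \<in> T \<Longrightarrow> e * t \<in> S"
begin

lemma summand_mult_closed:
  assumes "t \<in> T" and "s \<in> S"
  shows "t * s \<in> S" and "s * t \<in> S"
proof -
  have "t * s = t * e * s"
    using e_unit[OF assms(2)] by (simp add: mult.assoc)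
  then have "t * s = e * t * s"
    using e_commute[OF assms(1)] by simp
  then show "t * s \<in> S"
    using subalgebra_mult[OF S e_absorb[OF assms(1)] assms(2)] by (simp add: mult.assoc)
  have "s * t = s * e * t"
    using e_unit[OF assms(2)] by simp
  then have "s * t = s * (e * t)"
    by (simp add: mult.assoc)
  then show "s * t \<in> S"
    using subalgebra_mult[OF S assms(2) e_absorb[OF assms(1)]] by simp
qed

lemma subalgebra_sums: "subalgebra scale {t + s | t s. t \<in> T \<and> s \<in> S}"
  unfolding subalgebra_def
proof (intro conjI ballI)
  show "subspace {t + s | t s. t \<in> T \<and> s \<in> S}"
    using subspace_sums[OF subalgebra_subspace[OF T] subalgebra_subspace[OF S]] .
  fix x y assume "x \<in> {t + s | t s. t \<in> T \<and> s \<in> S}" "y \<in> {t + s | t s. t \<in> T \<and> s \<in> S}"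
  then obtain t s t' s' where ts: "t \<in> T" "s \<in> S" "t' \<in> T" "s' \<in> S" and "x = t + s" "y = t' + s'"
    by blast
  then have "x * y = t * t' + (t * s' + s * t' + s * s')"
    by (simp add: algebra_simps)
  moreover have "t * s' + s * t' + s * s' \<in> S"
    using summand_mult_closed ts subalgebra_mult[OF S] subspace_add[OF subalgebra_subspace[OF S]]
    by simp
  moreover have "t * t' \<in> T"
    using subalgebra_mult[OF T] ts by blast
  ultimately show "x * y \<in> {t + s | t s. t \<in> T \<and> s \<in> S}"
    by blast
qed

lemma sums_unit_mult_eq_0:
  assumes "semiprime S" and "x \<in> {t + s | t s. t \<in> T \<and> s \<in> S}"
    and nil: "\<And>a. a \<in> {t + s | t s. t \<in> T \<and> s \<in> S} \<Longrightarrow> x * a * x = 0"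
  shows "e * x = 0"
proof -
  obtain t s where "t \<in> T" "s \<in> S" and x: "x = t + s"
    using assms(2) by blast
  have S_sub: "S \<subseteq> {t + s | t s. t \<in> T \<and> s \<in> S}"
    using subspace_0[OF subalgebra_subspace[OF T]] by force
  have ex: "e * x = e * t + s" and xe: "x * e = e * t + s"
    unfolding x using e_unit[OF \<open>s \<in> S\<close>] e_commute[OF \<open>t \<in> T\<close>] by (simp_all add: algebra_simps)
  have sandwich: "e * x * c * (e * x) = x * (e * c * e) * x" for c
  proof -
    have "e * x * c * (e * x) = x * e * c * (e * x)"
      using ex xe by simp
    then show ?thesis
      by (simp add: mult.assoc)
  qed
  show ?thesis
  proof (rule semiprimeD[OF assms(1)])
    show "e * x \<in> S"
      unfolding ex using subspace_add[OF subalgebra_subspace[OF S] e_absorb[OF \<open>t \<in> T\<close>] \<open>s \<in> S\<close>] .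
    have "e * x * (e * x) = x * e * (e * x)"
      using ex xe by simp
    also have "\<dots> = x * (e * e) * x"
      by (simp add: mult.assoc)
    also have "\<dots> = x * e * x"
      using e_unit[OF e_mem] by simp
    also have "\<dots> = 0"
      using nil S_sub e_mem by blast
    finally show "e * x * (e * x) = 0" .
    show "e * x * c * (e * x) = 0" if "c \<in> S" for c
    proof -
      have "x * c * x = 0"
        using nil S_sub that by blast
      then show ?thesis
        using sandwich[of c] e_unit[OF that] by simp
    qed
  qed
qed

lemma complement_nil_imp_eq_0:
  assumes "semiprime T" and J: "ideal_of scale UNIV J" "e \<in> J" "T \<inter> J = {0}" and "t \<in> T"
    and nil: "(t - e * t) * (t - e * t) = 0" "\<And>a. a \<in> T \<Longrightarrow> (t - e * t) * a * (t - e * t) = 0"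
  shows "t = 0"
proof -
  have ee: "e * e = e"
    using e_unit[OF e_mem] by blast
  have T_vanish: "p = 0" if "p \<in> T" and "p - e * p = 0" for p
  proof -
    have "e * p \<in> J"
      using J(1,2) unfolding ideal_of_def by blast
    then show ?thesis
      using that J(3) by auto
  qed
  show ?thesis
  proof (rule semiprimeD[OF assms(1) \<open>t \<in> T\<close>])
    have "(t - e * t) * (t - e * t) = t * t - e * (t * t)"
      using idempotent_complement_mult[OF ee e_commute[OF \<open>t \<in> T\<close>, symmetric]] .
    then show "t * t = 0"
      using T_vanish subalgebra_mult[OF T \<open>t \<in> T\<close> \<open>t \<in> T\<close>] nil(1) by simp
    fix a assume "a \<in> T"
    have "(t * a) * e = e * (t * a)"
      using e_commute[OF \<open>t \<in> T\<close>] e_commute[OF \<open>a \<in> T\<close>]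
      by (simp add: mult.assoc flip: mult.assoc[of e])
    then have "(t - e * t) * a * (t - e * t) = t * a * t - e * (t * a * t)"
      using idempotent_complement_mult[OF ee, of "t * a" t]
      by (simp add: left_diff_distrib mult.assoc)
    moreover have "t * a * t \<in> T"
      using subalgebra_mult[OF T] \<open>t \<in> T\<close> \<open>a \<in> T\<close> by blast
    ultimately show "t * a * t = 0"
      using T_vanish nil(2)[OF \<open>a \<in> T\<close>] by simp
  qed
qed

lemma semiprime_sums:
  assumes "semiprime T" and "semiprime S"
    and J: "ideal_of scale UNIV J" "e \<in> J" "T \<inter> J = {0}"
  shows "semiprime {t + s | t s. t \<in> T \<and> s \<in> S}" (is "semiprime ?A")
  unfolding semiprime_def
proof (intro ballI impI)
  fix x assume "x \<in> ?A" and nil: "x * x = 0 \<and> (\<forall>a\<in>?A. x * a * x = 0)"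
  then obtain t s where "t \<in> T" "s \<in> S" and x: "x = t + s"
    by blast
  have "e * x = 0"
    using sums_unit_mult_eq_0[OF assms(2) \<open>x \<in> ?A\<close>] nil by blast
  then have "e * t + s = 0"
    unfolding x using e_unit[OF \<open>s \<in> S\<close>] by (simp add: distrib_left)
  then have x_T: "x = t - e * t"
    unfolding x by (simp add: eq_neg_iff_add_eq_0 add.commute)
  have "T \<subseteq> ?A"
    using subspace_0[OF subalgebra_subspace[OF S]] by force
  then have "t = 0"
    using complement_nil_imp_eq_0[OF assms(1) J \<open>t \<in> T\<close>] nil unfolding x_T by blast
  then show "x = 0"
    using x_T by simp
qed

end

lemma fdss_subalgebra_spanning_set:
  assumes "fdss_subalgebra scale T"
  obtains B where "finite B" "B \<subseteq> T" "span B = T"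
  using assms unfolding fdss_subalgebra_def fin_dim_def by blast

lemma central_idempotent_if_locally_fdss:
  assumes "locally_fdss scale UNIV" and J: "ideal_of scale UNIV J" and "fdss_subalgebra scale T"
    and "finite Y" and "Y \<subseteq> J"
  shows "\<exists>e\<in>J. e * e = e \<and> Y \<subseteq> {e * j * e | j. j \<in> J} \<and> (\<forall>t\<in>T. e * t = t * e)"
proof -
  obtain B where "finite B" "B \<subseteq> T" "span B = T"
    using fdss_subalgebra_spanning_set[OF assms(3)] .
  then obtain A where "Y \<union> B \<subseteq> A" and A: "fdss_subalgebra scale A"
    using assms(1)[unfolded locally_fdss_def, rule_format, of "Y \<union> B"] \<open>finite Y\<close> by blast
  have "subspace A"
    using A fdss_subalgebra_iff subalgebra_subspace by blast
  then have "T \<subseteq> A"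
    using span_minimal \<open>Y \<union> B \<subseteq> A\<close> \<open>span B = T\<close> by blast
  have "ideal_of scale A (A \<inter> J)"
    using J subspace_inter[OF \<open>subspace A\<close>] A fdss_subalgebra_iff subalgebra_mult
    unfolding ideal_of_def by auto
  then obtain e where e: "e \<in> A \<inter> J" "e * e = e" and unit: "\<And>y. y \<in> A \<inter> J \<Longrightarrow> e * y = y \<and> y * e = y"
    and central: "\<And>a. a \<in> A \<Longrightarrow> e * a = a * e"
    using ideal_central_unit_exists[OF A] by blast
  have "Y \<subseteq> {e * j * e | j. j \<in> J}"
  proof
    fix y assume "y \<in> Y"
    then have "y \<in> A \<inter> J"
      using \<open>Y \<union> B \<subseteq> A\<close> \<open>Y \<subseteq> J\<close> by blast
    then have "y = e * y * e"
      using unit by simp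
    with \<open>y \<in> A \<inter> J\<close> show "y \<in> {e * j * e | j. j \<in> J}"
      by blast
  qed
  with e central \<open>T \<subseteq> A\<close> show ?thesis
    by blast
qed

lemma fdss_subalgebra_sums_corner:
  assumes J: "ideal_of scale UNIV J" and T: "fdss_subalgebra scale T" and "T \<inter> J = {0}"
    and S0: "fdss_subalgebra scale S0" and e: "e \<in> S0" "e \<in> J" "e * e = e"
    and e_commute: "\<And>t. t \<in> T \<Longrightarrow> e * t = t * e" and e_S0: "\<And>t. t \<in> T \<Longrightarrow> e * t \<in> S0"
  shows "fdss_subalgebra scale {t + s | t s. t \<in> T \<and> s \<in> corner e S0}"
proof -
  have T': "subalgebra scale T" "fin_spanned T" "semiprime T"
    and S0': "subalgebra scale S0" "fin_spanned S0" "semiprime S0"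
    using T S0 fdss_subalgebra_iff by blast+
  have S: "subalgebra scale (corner e S0)" "fin_spanned (corner e S0)" "semiprime (corner e S0)"
    using subalgebra_corner[OF S0'(1) e(1,3)] fin_spanned_corner[OF S0'(2)]
      semiprime_corner[OF S0'(1,3) e(1,3)] by blast+
  have e_unit: "e * s = s \<and> s * e = s" if "s \<in> corner e S0" for s
    using corner_unit[OF e(3) that] by blast
  have "e \<in> corner e S0"
    using corner_memI[OF e(1)] e(3) by simp
  have e_absorb: "e * t \<in> corner e S0" if "t \<in> T" for t
  proof (rule corner_memI[OF e_S0[OF that]])
    have "e * (e * t) * e = e * (t * e)"
      using e(3) by (simp add: mult.assoc flip: mult.assoc[of e e])
    also have "\<dots> = e * t"
      using e_commute[OF that, symmetric] e(3) by (simp flip: mult.assoc)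
    finally show "e * (e * t) * e = e * t" .
  qed
  show ?thesis
    unfolding fdss_subalgebra_iff
    using subalgebra_sums[OF T'(1) S(1) \<open>e \<in> corner e S0\<close> e_unit e_commute e_absorb]
      semiprime_sums[OF T'(1) S(1) \<open>e \<in> corner e S0\<close> e_unit e_commute e_absorb T'(3) S(3) J e(2)
        \<open>T \<inter> J = {0}\<close>]
      fin_spanned_sums[OF T'(2) S(2)] by blast
qed

lemma locally_fdss_if_central_idempotents:
  assumes J: "ideal_of scale UNIV J" and "locally_fdss scale J"
    and T: "fdss_subalgebra scale T" and "T \<inter> J = {0}" and "\<forall>r. \<exists>t\<in>T. \<exists>j\<in>J. r = t + j"
    and idempotents: "\<forall>Y. finite Y \<and> Y \<subseteq> J \<longrightarrow>
      (\<exists>e\<in>J. e * e = e \<and> Y \<subseteq> {e * j * e | j. j \<in> J} \<and> (\<forall>t\<in>T. e * t = t * e))"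
  shows "locally_fdss scale UNIV"
  unfolding locally_fdss_def
proof (intro allI impI)
  fix F :: "'a set" assume "finite F \<and> F \<subseteq> UNIV"
  obtain j_part where j_part: "\<And>r. j_part r \<in> J \<and> r - j_part r \<in> T"
    using summand_projection_exists[OF assms(5)] by blast
  obtain e where e: "e \<in> J" "e * e = e" "j_part ` F \<subseteq> {e * j * e | j. j \<in> J}"
    and e_commute: "\<forall>t\<in>T. e * t = t * e"
    using idempotents[rule_format, of "j_part ` F"] \<open>finite F \<and> F \<subseteq> UNIV\<close> j_part by blast
  obtain B where "finite B" "B \<subseteq> T" "span B = T"
    using fdss_subalgebra_spanning_set[OF T] .
  define G where "G = insert e (j_part ` F \<union> (\<lambda>b. e * b) ` B)"
  have "finite G \<and> G \<subseteq> J"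
    unfolding G_def using \<open>finite F \<and> F \<subseteq> UNIV\<close> \<open>finite B\<close> j_part e(1) J
    unfolding ideal_of_def by auto
  then obtain S0 where "G \<subseteq> S0" and S0: "fdss_subalgebra scale S0"
    using assms(2)[unfolded locally_fdss_def, rule_format, of G] by blast
  then have "e \<in> S0" and "j_part ` F \<subseteq> S0" and "(\<lambda>b. e * b) ` B \<subseteq> S0"
    unfolding G_def by simp_all
  have e_S0: "e * t \<in> S0" if "t \<in> T" for t
  proof -
    have "subspace S0"
      using S0 fdss_subalgebra_iff subalgebra_subspace by blast
    then have "span ((\<lambda>b. e * b) ` B) \<subseteq> S0"
      using span_minimal \<open>(\<lambda>b. e * b) ` B \<subseteq> S0\<close> by blast
    then show ?thesis
      using mult_left_span[of t B e] that \<open>span B = T\<close> by blast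
  qed
  have "F \<subseteq> {t + s | t s. t \<in> T \<and> s \<in> corner e S0}"
  proof
    fix r assume "r \<in> F"
    then obtain j where "j_part r = e * j * e"
      using e(3) by blast
    then have "e * j_part r * e = j_part r"
      using e(2) by (simp add: mult.assoc flip: mult.assoc[of e e])
    moreover have "j_part r \<in> S0"
      using \<open>j_part ` F \<subseteq> S0\<close> \<open>r \<in> F\<close> by blast
    ultimately have "j_part r \<in> corner e S0"
      by (intro corner_memI)
    moreover have "r = (r - j_part r) + j_part r" and "r - j_part r \<in> T"
      using j_part by simp_all
    ultimately show "r \<in> {t + s | t s. t \<in> T \<and> s \<in> corner e S0}"
      by blast
  qed
  moreover have "fdss_subalgebra scale {t + s | t s. t \<in> T \<and> s \<in> corner e S0}"
    using fdss_subalgebra_sums_corner[OF J T \<open>T \<inter> J = {0}\<close> S0 \<open>e \<in> S0\<close> e(1,2)] e_commute e_S0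
    by blast
  ultimately show "\<exists>S. F \<subseteq> S \<and> S \<subseteq> UNIV \<and> fdss_subalgebra scale S"
    by blast
qed

end

theorem lemma4p2:
  fixes scale :: "'k::field \<Rightarrow> 'a::ring \<Rightarrow> 'a" and J T :: "'a set"
  assumes "K_algebra scale"
    and "ideal_of scale UNIV J"
    and "locally_fdss scale J"
    and "fdss_subalgebra scale T"
    and "T \<inter> J = {0}"
    and "\<forall>r. \<exists>t\<in>T. \<exists>j\<in>J. r = t + j"
  shows "locally_fdss scale UNIV \<longleftrightarrow>
    (\<forall>Y. finite Y \<and> Y \<subseteq> J \<longrightarrow>
      (\<exists>e\<in>J. e * e = e \<and> Y \<subseteq> {e * j * e | j. j \<in> J} \<and> (\<forall>t\<in>T. e * t = t * e)))"
proof -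
  interpret assoc_algebra scale
    using assms(1) by (rule assoc_algebraI)
  show ?thesis
    using central_idempotent_if_locally_fdss[OF _ assms(2,4)]
      locally_fdss_if_central_idempotents[OF assms(2-6)]
    by blast
qed

end
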